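(* Consider the two-bidder simultaneous sealed-bid auction of $n\ge2$ objects described in the context. Suppose ${\mathcal B}$'s random bid vector $(b_1,\dots,b_n)$ satisfies $\sum_i b_i=1$ and each $b_i$ has cumulative distribution function $F_2$, where $F_2(x)=\frac{n}{2}x$ for $x\in[0,\frac{2}{n}]$ and $F_2(x)=1$ for $x\in(\frac2n,1]$. Then the maximum, over all (possibly randomized, independent of ${\mathcal B}$'s bids) bid vectors $(a_1,\dots,a_n)$ of ${\mathcal A}$ with positive entries and $\sum a_i\le 1$, of the expected number of objects won by ${\mathcal A}$ equals exactly $n/2$.
   Context: Auction model: $n$ objects are auctioned simultaneously to two bidders ${\mathcal B}$ and ${\mathcal A}$; each has budget $1$ and submits a vector of bids (one per object) with sum at most $1$. Each object is won by the higher bidder on it; in case of a tie each wins with probability $1/2$. ${\mathcal A}$ knows ${\mathcal B}$'s bidding algorithm (the distribution of his bids) but not the realized bids. *)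

theory Defs
  imports "HOL-Probability.Probability"
begin

text \<open>Bid vectors of n objects are functions nat => real, meaningful on {..<n};
  the measurable space of bid vectors is the product of Borel spaces.\<close>

definition bid_space :: "nat \<Rightarrow> (nat \<Rightarrow> real) measure" where
  "bid_space n = PiM {..<n} (\<lambda>_. borel)"

definition F2 :: "nat \<Rightarrow> real \<Rightarrow> real" where
  "F2 n x = (if x < 0 then 0 else if x \<le> 2 / real n then real n / 2 * x else 1)"

text \<open>Number of objects won by A (ties count 1/2, i.e. the expected value of the coin flip).\<close>
definition objects_won :: "nat \<Rightarrow> (nat \<Rightarrow> real) \<Rightarrow> (nat \<Rightarrow> real) \<Rightarrow> real" where
  "objects_won n a b = (\<Sum>i<n. if b i < a i then 1 else if a i = b i then 1 / 2 else 0)"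

definition A_strategy :: "nat \<Rightarrow> (nat \<Rightarrow> real) measure \<Rightarrow> bool" where
  "A_strategy n N \<longleftrightarrow> prob_space N \<and> sets N = sets (bid_space n) \<and>
     (AE a in N. (\<forall>i<n. 0 < a i) \<and> (\<Sum>i<n. a i) \<le> 1)"

definition expected_win :: "nat \<Rightarrow> (nat \<Rightarrow> real) measure \<Rightarrow> (nat \<Rightarrow> real) measure \<Rightarrow> real" where
  "expected_win n N M = (\<integral>ab. objects_won n (fst ab) (snd ab) \<partial>(N \<Otimes>\<^sub>M M))"

end

theory Submission
  imports Defs
begin

text \<open>Against a fixed bid vector \<open>a\<close>, object \<open>i\<close> is won with probability \<open>P(b\<^sub>i < a\<^sub>i)\<close>
  and tied with probability \<open>P(b\<^sub>i = a\<^sub>i)\<close>. As the marginal CDF \<open>F\<^sub>2\<close> is continuous, ties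
  have probability zero, so the expected number of objects won is \<open>\<Sum>\<^sub>i F\<^sub>2(a\<^sub>i)\<close>; and since
  \<open>F\<^sub>2(x) \<le> n x / 2\<close> with equality on \<open>[0, 2/n]\<close>, this is at most \<open>n/2\<close>, attained by
  \<open>a\<^sub>i = 1/n\<close>. A randomized strategy only averages these values. Only the marginals of
  B's bids enter.\<close>

lemma objects_won_nonneg: "0 \<le> objects_won n a b"
  unfolding objects_won_def by (intro sum_nonneg) auto

lemma objects_won_le: "objects_won n a b \<le> real n"
proof -
  have "objects_won n a b \<le> (\<Sum>i<n. 1)"
    unfolding objects_won_def by (intro sum_mono) auto
  then show ?thesis by simp
qed

lemma measurable_objects_won_pair:
  "(\<lambda>ab. objects_won n (fst ab) (snd ab)) \<in> borel_measurable (bid_space n \<Otimes>\<^sub>M bid_space n)"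
  unfolding objects_won_def bid_space_def by measurable

lemma measurable_objects_won: "objects_won n a \<in> borel_measurable (bid_space n)"
  unfolding objects_won_def bid_space_def by measurable

lemma sets_bid_le:
  assumes "i < n"
  shows "{b \<in> space (bid_space n). b i \<le> x} \<in> sets (bid_space n)"
proof -
  have [measurable]: "i \<in> {..<n}" using assms by simp
  show ?thesis unfolding bid_space_def by measurable
qed

lemma pair_prob_spaceI:
  assumes "prob_space N" "prob_space M"
  shows "pair_prob_space N M"
  using assms unfolding pair_prob_space_def pair_sigma_finite_def
  by (auto intro: prob_space_imp_sigma_finite)

lemma
  assumes N: "prob_space N" "sets N = sets (bid_space n)"
    and M: "prob_space M" "sets M = sets (bid_space n)"
  shows integrable_expected_win_inner: "integrable N (\<lambda>a. \<integral>b. objects_won n a b \<partial>M)"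
    and expected_win_iterated: "expected_win n N M = (\<integral>a. (\<integral>b. objects_won n a b \<partial>M) \<partial>N)"
proof -
  interpret pair_prob_space N M using pair_prob_spaceI N M by blast
  have "(\<lambda>ab. objects_won n (fst ab) (snd ab)) \<in> borel_measurable (N \<Otimes>\<^sub>M M)"
    using measurable_objects_won_pair
      measurable_cong_sets[OF sets_pair_measure_cong[OF N(2) M(2)] refl] by blast
  then have int: "integrable (N \<Otimes>\<^sub>M M) (\<lambda>ab. objects_won n (fst ab) (snd ab))"
    by (intro P.integrable_const_bound[where B="real n"])
      (simp_all add: abs_of_nonneg[OF objects_won_nonneg] objects_won_le)
  show "integrable N (\<lambda>a. \<integral>b. objects_won n a b \<partial>M)"
    using integrable_fst'[OF int] by simp
  show "expected_win n N M = (\<integral>a. (\<integral>b. objects_won n a b \<partial>M) \<partial>N)"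
    unfolding expected_win_def using integral_fst'[OF int] by simp
qed

lemma
  assumes M: "prob_space M" "sets M = sets (bid_space n)"
    and cdf: "\<And>i x. i < n \<Longrightarrow> measure M {b \<in> space M. b i \<le> x} = F x"
  shows integrable_sum_indicator_le:
      "integrable M (\<lambda>b. \<Sum>i<n. indicator {b \<in> space M. b i \<le> x i} b :: real)"
    and integral_sum_indicator_le_cdf:
      "(\<integral>b. (\<Sum>i<n. indicator {b \<in> space M. b i \<le> x i} b :: real) \<partial>M) = (\<Sum>i<n. F (x i))"
proof -
  interpret prob_space M by fact
  have sets_le: "{b \<in> space M. b i \<le> x i} \<in> sets M" if "i < n" for i
    using sets_bid_le[OF that] by (simp add: M(2) sets_eq_imp_space_eq[OF M(2)])
  then show "integrable M (\<lambda>b. \<Sum>i<n. indicator {b \<in> space M. b i \<le> x i} b :: real)"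
    by (auto simp: emeasure_eq_measure)
  have "(\<integral>b. (\<Sum>i<n. indicator {b \<in> space M. b i \<le> x i} b :: real) \<partial>M)
      = (\<Sum>i<n. measure M {b \<in> space M. b i \<le> x i})"
    using sets_le
    by (auto intro!: Bochner_Integration.integral_sum simp: emeasure_eq_measure)
  then show "(\<integral>b. (\<Sum>i<n. indicator {b \<in> space M. b i \<le> x i} b :: real) \<partial>M) = (\<Sum>i<n. F (x i))"
    by (simp add: cdf)
qed

lemma integral_objects_won_eq_sum_cdf:
  fixes F :: "real \<Rightarrow> real"
  assumes M: "prob_space M" "sets M = sets (bid_space n)"
    and cdf: "\<And>i x. i < n \<Longrightarrow> measure M {b \<in> space M. b i \<le> x} = F x"
    and cont: "continuous_on UNIV F"
  shows "(\<integral>b. objects_won n a b \<partial>M) = (\<Sum>i<n. F (a i))"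
proof -
  interpret prob_space M by fact
  let ?count = "\<lambda>x b. \<Sum>i<n. indicator {b \<in> space M. b i \<le> x i} b :: real"
  note count_int = integrable_sum_indicator_le[OF M cdf]
    and count_eq = integral_sum_indicator_le_cdf[OF M cdf]
  have "objects_won n a \<in> borel_measurable M"
    using measurable_objects_won measurable_cong_sets[OF M(2) refl] by blast
  then have won_int: "integrable M (objects_won n a)"
    by (intro integrable_const_bound[where B="real n"])
      (simp_all add: abs_of_nonneg[OF objects_won_nonneg] objects_won_le)
  have upper: "(\<integral>b. objects_won n a b \<partial>M) \<le> (\<Sum>i<n. F (a i))"
  proof -
    have "objects_won n a b \<le> ?count a b" if "b \<in> space M" for b
      unfolding objects_won_def using that by (intro sum_mono) (auto simp: indicator_def)
    then have "(\<integral>b. objects_won n a b \<partial>M) \<le> (\<integral>b. ?count a b \<partial>M)"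
      by (intro integral_mono[OF won_int count_int])
    then show ?thesis by (simp add: count_eq)
  qed
  \<comment> \<open>\<open>b\<^sub>i \<le> a\<^sub>i - e\<close> forces a strict win; continuity of \<open>F\<close> then lets \<open>e \<rightarrow> 0\<close>.\<close>
  have lower: "(\<Sum>i<n. F (a i - e)) \<le> (\<integral>b. objects_won n a b \<partial>M)" if "0 < e" for e
  proof -
    have "?count (\<lambda>i. a i - e) b \<le> objects_won n a b" for b
      unfolding objects_won_def using \<open>0 < e\<close> by (intro sum_mono) (auto simp: indicator_def)
    then have "(\<integral>b. ?count (\<lambda>i. a i - e) b \<partial>M) \<le> (\<integral>b. objects_won n a b \<partial>M)"
      by (intro integral_mono[OF count_int won_int])
    then show ?thesis by (simp add: count_eq)
  qed
  have "((\<lambda>e. \<Sum>i<n. F (a i - e)) \<longlongrightarrow> (\<Sum>i<n. F (a i))) (at_right 0)"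
    using cont by (intro tendsto_intros isCont_tendsto_compose[where g=F])
      (auto simp: continuous_on_eq_continuous_at intro!: tendsto_eq_intros)
  then have "(\<Sum>i<n. F (a i)) \<le> (\<integral>b. objects_won n a b \<partial>M)"
    by (rule tendsto_upperbound) (auto simp: eventually_at_right_less lower
        intro: eventually_mono[OF eventually_at_right_less])
  with upper show ?thesis by linarith
qed

lemma F2_eq_clamp:
  assumes "0 < n"
  shows "F2 n x = max 0 (min 1 (real n / 2 * x))"
proof -
  have "x < 0 \<Longrightarrow> real n / 2 * x < 0"
    using assms by (simp add: mult_pos_neg)
  moreover have "x \<le> 2 / real n \<longleftrightarrow> real n / 2 * x \<le> 1"
    using assms by (simp add: field_simps)
  ultimately show ?thesis
    unfolding F2_def by auto
qed

lemma continuous_on_F2: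
  assumes "0 < n"
  shows "continuous_on UNIV (F2 n)"
proof -
  have "F2 n = (\<lambda>x. max 0 (min 1 (real n / 2 * x)))"
    using F2_eq_clamp[OF assms] by blast
  then show ?thesis by (simp only:) (intro continuous_intros)
qed

lemma F2_le_linear: "0 < n \<Longrightarrow> 0 \<le> x \<Longrightarrow> F2 n x \<le> real n / 2 * x"
  unfolding F2_def by (auto simp: field_simps)

lemma F2_linear: "0 \<le> x \<Longrightarrow> x \<le> 2 / real n \<Longrightarrow> F2 n x = real n / 2 * x"
  unfolding F2_def by auto

lemma sum_F2_le:
  assumes "0 < n" "\<And>i. i < n \<Longrightarrow> 0 \<le> a i" "(\<Sum>i<n. a i) \<le> 1"
  shows "(\<Sum>i<n. F2 n (a i)) \<le> real n / 2"
proof -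
  have "(\<Sum>i<n. F2 n (a i)) \<le> (\<Sum>i<n. real n / 2 * a i)"
    using assms(1,2) by (intro sum_mono F2_le_linear) auto
  also have "\<dots> = real n / 2 * (\<Sum>i<n. a i)"
    by (simp add: sum_distrib_left)
  also have "\<dots> \<le> real n / 2"
    using assms(3) by (simp add: mult_left_le)
  finally show ?thesis .
qed

lemma expected_win_le:
  assumes N: "prob_space N" "sets N = sets (bid_space n)"
    and M: "prob_space M" "sets M = sets (bid_space n)"
    and bound: "AE a in N. (\<integral>b. objects_won n a b \<partial>M) \<le> c"
  shows "expected_win n N M \<le> c"
proof -
  have "(\<integral>a. (\<integral>b. objects_won n a b \<partial>M) \<partial>N) \<le> (\<integral>a. c \<partial>N)"
    using bound integrable_expected_win_inner[OF N M] N(1)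
    by (intro integral_mono_AE) (auto intro: finite_measure.integrable_const prob_space.finite_measure)
  also have "\<dots> = c"
    using prob_space.prob_space[OF N(1)] by simp
  finally show ?thesis
    using expected_win_iterated[OF N M] by simp
qed

lemma A_strategy_return:
  assumes a: "a \<in> space (bid_space n)" and "\<forall>i<n. 0 < a i" "(\<Sum>i<n. a i) \<le> 1"
  shows "A_strategy n (return (bid_space n) a)"
proof -
  have admissible: "Measurable.pred (bid_space n) (\<lambda>a. (\<forall>i<n. 0 < a i) \<and> (\<Sum>i<n. a i) \<le> 1)"
    unfolding bid_space_def by measurable
  have "AE x in return (bid_space n) a. (\<forall>i<n. 0 < x i) \<and> (\<Sum>i<n. x i) \<le> 1"
    unfolding AE_return[OF a admissible] using assms(2,3) by blast
  then show ?thesis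
    unfolding A_strategy_def using prob_space_return[OF a] by simp
qed

lemma expected_win_return:
  assumes a: "a \<in> space (bid_space n)"
    and M: "prob_space M" "sets M = sets (bid_space n)"
  shows "expected_win n (return (bid_space n) a) M = (\<integral>b. objects_won n a b \<partial>M)"
proof -
  have R: "prob_space (return (bid_space n) a)" "sets (return (bid_space n) a) = sets (bid_space n)"
    using prob_space_return[OF a] by auto
  have "(\<lambda>a. \<integral>b. objects_won n a b \<partial>M) \<in> borel_measurable (bid_space n)"
    using borel_measurable_integrable[OF integrable_expected_win_inner[OF R M]]
      measurable_cong_sets[OF R(2) refl] by blast
  then show ?thesis
    using expected_win_iterated[OF R M] a by (simp add: integral_return)
qed

theorem lemma2p2:
  fixes n :: nat and M :: "(nat \<Rightarrow> real) measure"
  assumes "n \<ge> 2"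
    and "prob_space M"
    and "sets M = sets (bid_space n)"
    and "AE b in M. (\<Sum>i<n. b i) = 1"
    and "\<And>i x. i < n \<Longrightarrow> measure M {b \<in> space M. b i \<le> x} = F2 n x"
  shows "(\<forall>N. A_strategy n N \<longrightarrow> expected_win n N M \<le> real n / 2) \<and>
         (\<exists>N. A_strategy n N \<and> expected_win n N M = real n / 2)"
proof -
  have n: "0 < n" using assms(1) by simp
  have win_against: "(\<integral>b. objects_won n a b \<partial>M) = (\<Sum>i<n. F2 n (a i))" for a
    by (rule integral_objects_won_eq_sum_cdf[OF assms(2,3,5) continuous_on_F2[OF n]])
  have "expected_win n N M \<le> real n / 2" if "A_strategy n N" for N
  proof -
    have N: "prob_space N" "sets N = sets (bid_space n)"
      and admissible: "AE a in N. (\<forall>i<n. 0 < a i) \<and> (\<Sum>i<n. a i) \<le> 1"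
      using that unfolding A_strategy_def by auto
    from admissible have "AE a in N. (\<integral>b. objects_won n a b \<partial>M) \<le> real n / 2"
    proof eventually_elim
      case (elim a)
      then have "(\<Sum>i<n. F2 n (a i)) \<le> real n / 2"
        by (intro sum_F2_le[OF n]) (auto intro: less_imp_le)
      then show ?case by (simp add: win_against)
    qed
    then show ?thesis by (rule expected_win_le[OF N assms(2,3)])
  qed
  moreover
  define u where "u = (\<lambda>i\<in>{..<n}. 1 / real n)"
  have u: "u \<in> space (bid_space n)" "\<forall>i<n. 0 < u i" "(\<Sum>i<n. u i) = 1"
    using n by (auto simp: u_def bid_space_def space_PiM)
  have "(\<Sum>i<n. F2 n (u i)) = real n / 2"
    using n by (simp add: u_def F2_linear field_simps)
  then have "A_strategy n (return (bid_space n) u) \<and>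
      expected_win n (return (bid_space n) u) M = real n / 2"
    using A_strategy_return[OF u(1,2)] u(3) expected_win_return[OF u(1) assms(2,3)] win_against
    by simp
  ultimately show ?thesis by blast
qed

end
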